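(* Let $\alpha>0$ and let $f$ be $2\pi$-periodic and meromorphic in the closed strip $\{s\in\mathbb{C}: |\operatorname{Im} s|\le \alpha\}$, with only one simple pole in this strip, located at $s_0$ with $\operatorname{Im} s_0\neq 0$. Let $r_0$ be the residue of $f$ at $s_0$, and suppose $|f(s)|\le F$ for all $s$ with $|\operatorname{Im} s|=\alpha$. For a positive integer $N$ define the periodic trapezoid rule error $$E_N := \frac{2\pi}{N}\sum_{j=1}^N f(2\pi j/N) - \int_0^{2\pi} f(s)\,ds.$$ Then $$|E_N| \le \frac{2\pi |r_0|}{e^{|\operatorname{Im} s_0| N}-1} + \frac{4\pi F}{e^{\alpha N}-1}.$$ *)

theory Defs
  imports "HOL-Complex_Analysis.Complex_Analysis"
begin

definition strip :: "real \<Rightarrow> complex set" where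
  "strip \<alpha> = {s. \<bar>Im s\<bar> \<le> \<alpha>}"

definition trap_err :: "(complex \<Rightarrow> complex) \<Rightarrow> nat \<Rightarrow> complex" where
  "trap_err f N = (complex_of_real (2 * pi / real N)) * (\<Sum>j=1..N. f (of_real (2 * pi * real j / real N)))
                   - integral {0..2*pi} (\<lambda>t. f (of_real t))"

end

theory Submission
  imports Defs
begin

(* Choose a period window [c, c + 2\<pi>] containing the nodes 2\<pi>j/N (0 \<le> j < N) and exactly one
   translate s1 of the pole, with none of these on its boundary. The kernel
   q(z) = (e^(iNz) + 1) / (2 (e^(iNz) - 1)) = -(i/2) cot (Nz/2) has simple poles of residue 1/(iN) at the
   nodes, so the residue theorem on the rectangle [c, c + 2\<pi>] \<times> [-\<alpha>, \<alpha>], whose vertical sides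
   cancel by periodicity, turns the trapezoid sum into the difference of the integrals of f q along
   Im z = -\<alpha> and Im z = \<alpha>, minus 2\<pi>i res(f, s1) q(s1). The same argument for f alone on the two
   halves [-\<alpha>, 0] and [0, \<alpha>] relates the integrals of f along Im z = \<plusminus>\<alpha> to its integral over [0, 2\<pi>].
   Since q - 1/2 = 1/(e^(iNz) - 1) is at most 1/(e^(\<alpha>N) - 1) on Im z = -\<alpha>, and symmetrically
   q + 1/2 = e^(iNz)/(e^(iNz) - 1) on Im z = \<alpha>, the error is two boundary integrals of size
   2\<pi>F/(e^(\<alpha>N) - 1) plus the pole term 2\<pi>i res(f, s0) (\<plusminus>1/2 - q(s1)), which the same estimate
   bounds since |Im s1| = |Im s0|. *)

lemma periodic_of_int_mult:
  fixes g :: "'a::ring_1 \<Rightarrow> 'b"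
  assumes per: "\<And>z. g (z + p) = g z"
  shows "g (z + of_int k * p) = g z"
proof (induction k rule: int_induct[where k = 0])
  case (step1 i)
  have "z + of_int (i + 1) * p = (z + of_int i * p) + p" by (simp add: algebra_simps)
  with step1 show ?case by (simp only: per)
next
  case (step2 i)
  have "z + of_int i * p = (z + of_int (i - 1) * p) + p" by (simp add: algebra_simps)
  with step2 show ?case by (simp only: per)
qed simp

lemma contour_integral_linepath_periodic_shift:
  fixes g :: "complex \<Rightarrow> complex"
  assumes "\<And>z. g (z + w) = g z"
  shows "contour_integral (linepath (a + w) (b + w)) g = contour_integral (linepath a b) g"
proof -
  have lp: "linepath (a + w) (b + w) = (+) w \<circ> linepath a b"
    by (auto simp: linepath_def o_def algebra_simps fun_eq_iff scaleR_conv_of_real)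
  have g: "(\<lambda>x. g (x + w)) = g" using assms by auto
  have "(g has_contour_integral I) (linepath (a + w) (b + w)) \<longleftrightarrow> (g has_contour_integral I) (linepath a b)"
    for I
    using has_contour_integral_translate[of g I w "linepath a b"] unfolding lp g .
  then show ?thesis unfolding contour_integral_def contour_integrable_on_def by simp
qed

lemma contour_integral_rectpath_periodic:
  fixes g :: "complex \<Rightarrow> complex"
  assumes cont: "continuous_on (path_image (rectpath a b)) g"
    and per: "\<And>z. g (z + of_real (Re b - Re a)) = g z"
  shows "contour_integral (rectpath a b) g =
     contour_integral (linepath a (Complex (Re b) (Im a))) g - contour_integral (linepath (Complex (Re a) (Im b)) b) g"
proof -
  define a2 a4 where "a2 = Complex (Re b) (Im a)" and "a4 = Complex (Re a) (Im b)"
  have "path_image (rectpath a b)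
      = closed_segment a a2 \<union> closed_segment a2 b \<union> closed_segment b a4 \<union> closed_segment a4 a"
    by (simp add: rectpath_def Let_def path_image_join a2_def a4_def Un_assoc)
  then have c1: "continuous_on (closed_segment a a2) g" and c2: "continuous_on (closed_segment a2 b) g"
    and c3: "continuous_on (closed_segment b a4) g" and c4: "continuous_on (closed_segment a4 a) g"
    using cont by (auto elim: continuous_on_subset)
  have "contour_integral (rectpath a b) g = contour_integral (linepath a a2) g + (contour_integral (linepath a2 b) g
          + (contour_integral (linepath b a4) g + contour_integral (linepath a4 a) g))"
    unfolding rectpath_def Let_def a2_def[symmetric] a4_def[symmetric]
    using c1 c2 c3 c4 by (simp add: contour_integrable_continuous_linepath)
  also have "contour_integral (linepath b a4) g = - contour_integral (linepath a4 b) g"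
    using c3 by (rule contour_integral_reverse_linepath)
  also have "contour_integral (linepath a4 a) g = - contour_integral (linepath a a4) g"
    using c4 by (rule contour_integral_reverse_linepath)
  also have "contour_integral (linepath a2 b) g = contour_integral (linepath a a4) g"
  proof -
    have "a2 = a + of_real (Re b - Re a)" "b = a4 + of_real (Re b - Re a)"
      by (simp_all add: a2_def a4_def complex_eq_iff)
    with per show ?thesis using contour_integral_linepath_periodic_shift[of g _ a a4] by metis
  qed
  finally show ?thesis by (simp add: a2_def a4_def)
qed

lemma rectpath_residue_theorem:
  fixes h :: "complex \<Rightarrow> complex"
  assumes ab: "Re a < Re b" "Im a < Im b" and "finite pts" "pts \<subseteq> box a b"
    and "h analytic_on cbox a b - pts"
  shows "contour_integral (rectpath a b) h = 2 * pi * \<i> * (\<Sum>p\<in>pts. residue h p)"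
proof -
  obtain T where T: "open T" "cbox a b - pts \<subseteq> T" "h holomorphic_on T"
    using assms(5) analytic_on_holomorphic by blast
  (* Residue_theorem needs a connected open set around the rectangle. *)
  define S where "S = connected_component_set (T \<union> box a b) a"
  have "cbox a b \<subseteq> T \<union> box a b" using T(2) assms(4) by blast
  then have cbox_S: "cbox a b \<subseteq> S"
    unfolding S_def using ab
    by (intro connected_component_maximal convex_connected) (auto simp: in_cbox_complex_iff)
  have S_sub: "S - pts \<subseteq> T"
    using connected_component_subset[of "T \<union> box a b" a] T(2) box_subset_cbox unfolding S_def by blast
  have path_sub: "path_image (rectpath a b) \<subseteq> cbox a b - pts"
    using path_image_rectpath_subset_cbox[of a b] path_image_rectpath_inter_box[of a b] ab assms(4) by auto
  have "contour_integral (rectpath a b) h = 2 * pi * \<i> * (\<Sum>p\<in>pts. winding_number (rectpath a b) p * residue h p)"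
  proof (rule Residue_theorem[OF _ _ \<open>finite pts\<close>])
    show "open S" unfolding S_def using T(1) by (intro open_connected_component) auto
    show "connected S" unfolding S_def by (rule connected_connected_component)
    show "h holomorphic_on S - pts" using T(3) S_sub by (rule holomorphic_on_subset)
    show "path_image (rectpath a b) \<subseteq> S - pts" using path_sub cbox_S by blast
    show "\<forall>z. z \<notin> S \<longrightarrow> winding_number (rectpath a b) z = 0"
      using cbox_S ab by (auto intro!: winding_number_rectpath_outside)
  qed auto
  also have "(\<Sum>p\<in>pts. winding_number (rectpath a b) p * residue h p) = (\<Sum>p\<in>pts. residue h p)"
    using assms(4) by (intro sum.cong) (auto simp: winding_number_rectpath)
  finally show ?thesis .
qed

lemma periodic_rectangle_residue:
  fixes g :: "complex \<Rightarrow> complex"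
  assumes "L > 0" "y1 < y2" and per: "\<And>z. g (z + of_real L) = g z"
    and "finite pts" "pts \<subseteq> box (Complex c y1) (Complex (c + L) y2)"
    and ana: "g analytic_on cbox (Complex c y1) (Complex (c + L) y2) - pts"
  shows "contour_integral (linepath (Complex c y1) (Complex (c + L) y1)) g
           - contour_integral (linepath (Complex c y2) (Complex (c + L) y2)) g
         = 2 * pi * \<i> * (\<Sum>p\<in>pts. residue g p)"
proof -
  let ?a = "Complex c y1" and ?b = "Complex (c + L) y2"
  have "path_image (rectpath ?a ?b) \<subseteq> cbox ?a ?b - pts"
    using path_image_rectpath_subset_cbox[of ?a ?b] path_image_rectpath_inter_box[of ?a ?b] assms(1,2,5)
    by auto
  then have "continuous_on (path_image (rectpath ?a ?b)) g"
    using ana analytic_imp_holomorphic holomorphic_on_imp_continuous_on continuous_on_subset by blast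
  then have "contour_integral (rectpath ?a ?b) g
      = contour_integral (linepath ?a (Complex (c + L) y1)) g - contour_integral (linepath (Complex c y2) ?b) g"
    using per by (subst contour_integral_rectpath_periodic) simp_all
  with rectpath_residue_theorem[of ?a ?b pts g] assms show ?thesis by simp
qed

lemma contour_integral_real_period:
  fixes g :: "complex \<Rightarrow> complex"
  assumes "L > 0" and per: "\<And>z. g (z + of_real L) = g z" and cont: "continuous_on \<real> g"
    and c: "- L \<le> c" "c \<le> 0"
  shows "contour_integral (linepath (of_real c) (of_real (c + L))) g = integral {0..L} (\<lambda>t. g (of_real t))"
proof -
  have cont_seg: "continuous_on (closed_segment (of_real x) (of_real y)) g" for x y :: real
    using cont by (rule continuous_on_subset) (auto simp: closed_segment_of_real)
  have mem: "of_real x \<in> closed_segment (of_real a) (of_real b)" if "a \<le> x" "x \<le> b" for x a b :: real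
    using that by (simp only: of_real_closed_segment) (simp add: closed_segment_eq_real_ivl)
  let ?I = "\<lambda>x y. contour_integral (linepath (complex_of_real x) (of_real y)) g"
  have "?I c (c + L) = ?I c 0 + ?I 0 (c + L)"
    using contour_integral_split_linepath[OF cont_seg mem[of c 0 "c + L"]] c by simp
  also have "?I c 0 = ?I (c + L) L"
    using contour_integral_linepath_periodic_shift[of g "of_real L" "of_real c" 0] per by simp
  also have "?I (c + L) L + ?I 0 (c + L) = ?I 0 L"
    using contour_integral_split_linepath[OF cont_seg mem[of 0 "c + L" L]] c by simp
  also have "?I 0 L = integral {0..L} (\<lambda>t. g (of_real t))"
    using \<open>L > 0\<close> by (simp add: contour_integral_linepath_Reals_eq)
  finally show ?thesis .
qed

lemma residue_over_simple_zero:
  assumes "open s" "z \<in> s" and g: "g holomorphic_on s" and k: "k holomorphic_on s"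
    and deriv: "(k has_field_derivative k') (at z)" "k' \<noteq> 0" and "k z = 0"
    and nonzero: "\<And>w. w \<in> s - {z} \<Longrightarrow> k w \<noteq> 0"
  shows "residue (\<lambda>w. g w / k w) z = g z / k'"
proof (rule residue_simple'[OF \<open>open s\<close> \<open>z \<in> s\<close>])
  show "(\<lambda>w. g w / k w) holomorphic_on s - {z}"
    using g k nonzero by (intro holomorphic_on_divide) (auto intro: holomorphic_on_subset)
  have "isCont g z"
    using g assms(1,2) holomorphic_on_imp_continuous_on continuous_on_eq_continuous_at by blast
  moreover have "((\<lambda>w. (k w - k z) / (w - z)) \<longlongrightarrow> k') (at z)"
    using deriv(1) by (simp add: has_field_derivative_iff)
  ultimately have "((\<lambda>w. g w / ((k w - k z) / (w - z))) \<longlongrightarrow> g z / k') (at z)"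
    using deriv(2) by (intro tendsto_divide) (auto simp: isCont_def)
  moreover have "\<forall>\<^sub>F w in at z. g w / ((k w - k z) / (w - z)) = g w / k w * (w - z)"
    using \<open>k z = 0\<close> by (auto simp: eventually_at_filter)
  ultimately show "((\<lambda>w. g w / k w * (w - z)) \<longlongrightarrow> g z / k') (at z)"
    by (rule Lim_transform_eventually)
qed

lemma residue_mult_simple_pole:
  assumes "open s" "z \<in> s" and f: "f holomorphic_on s - {z}" and "is_pole f z" "zorder f z = -1"
    and g: "g holomorphic_on s"
  shows "residue (\<lambda>w. f w * g w) z = residue f z * g z"
proof -
  obtain r where r: "r > 0" "zor_poly f z holomorphic_on cball z r"
      "\<forall>w\<in>cball z r - {z}. f w = zor_poly f z w / (w - z)"
    using zorder_exist_pole[OF f assms(1,2,4)] assms(5) by auto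
  have "isCont (zor_poly f z) z"
    using r(1,2) holomorphic_on_imp_continuous_on[of _ "ball z r"] continuous_on_eq_continuous_at
    by (metis ball_subset_cball centre_in_ball holomorphic_on_subset open_ball)
  moreover have "\<forall>\<^sub>F w in at z. zor_poly f z w = f w * (w - z)"
    using r(1,3) unfolding eventually_at by (intro exI[of _ r]) (auto simp: dist_commute)
  ultimately have lim: "((\<lambda>w. f w * (w - z)) \<longlongrightarrow> zor_poly f z z) (at z)"
    unfolding isCont_def by (rule Lim_transform_eventually)
  have "isCont g z"
    using g assms(1,2) holomorphic_on_imp_continuous_on continuous_on_eq_continuous_at by blast
  then have "((\<lambda>w. f w * g w * (w - z)) \<longlongrightarrow> zor_poly f z z * g z) (at z)"
    using tendsto_mult[OF lim, of g "g z"] unfolding isCont_def by (simp add: mult_ac)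
  then have "residue (\<lambda>w. f w * g w) z = zor_poly f z z * g z"
    using f g by (intro residue_simple'[OF assms(1,2)] holomorphic_on_mult) (auto intro: holomorphic_on_subset)
  moreover have "residue f z = zor_poly f z z"
    using residue_simple'[OF assms(1,2) f lim] .
  ultimately show ?thesis by simp
qed

lemma not_is_pole_if_bounded_on_horizontal:
  fixes f :: "complex \<Rightarrow> complex"
  assumes "\<And>w. Im w = Im z \<Longrightarrow> norm (f w) \<le> B"
  shows "\<not> is_pole f z"
proof
  assume "is_pole f z"
  then have "filterlim (\<lambda>w. norm (f w)) at_top (at z)"
    unfolding is_pole_def by (rule filterlim_at_infinity_imp_norm_at_top)
  then have "\<forall>\<^sub>F w in at z. B + 1 \<le> norm (f w)"
    by (simp add: filterlim_at_top)
  then obtain d where d: "d > 0" "\<And>w. w \<noteq> z \<Longrightarrow> dist w z < d \<Longrightarrow> B + 1 \<le> norm (f w)"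
    unfolding eventually_at by blast
  have "B + 1 \<le> norm (f (z + of_real (d / 2)))" using d by (intro d(2)) (auto simp: dist_norm)
  moreover have "norm (f (z + of_real (d / 2))) \<le> B" using assms by simp
  ultimately show False by simp
qed

lemma lattice_point_in_period:
  fixes x c L :: real
  assumes "L > 0" and avoid: "\<And>k::int. c \<noteq> x + L * of_int k"
  shows "c < x + L * \<lceil>(c - x) / L\<rceil>" "x + L * \<lceil>(c - x) / L\<rceil> < c + L"
proof -
  let ?k = "\<lceil>(c - x) / L\<rceil>"
  have "L * ((c - x) / L) \<le> L * of_int ?k" "L * of_int ?k < L * ((c - x) / L + 1)"
    using \<open>L > 0\<close> by (intro mult_left_mono mult_strict_left_mono; linarith)+
  then have "c \<le> x + L * ?k" "x + L * ?k < c + L"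
    using \<open>L > 0\<close> by (simp_all add: distrib_left)
  with avoid[of ?k] show "c < x + L * ?k" "x + L * ?k < c + L" by auto
qed

lemma lattice_points_in_period_eq:
  fixes x c L :: real
  assumes "L > 0" "c < x + L * of_int k" "x + L * of_int k < c + L"
    "c < x + L * of_int k'" "x + L * of_int k' < c + L"
  shows "k = k'"
proof -
  have "L * of_int (k - k') < L * 1" "L * (- 1) < L * of_int (k - k')"
    using assms(2-5) by (simp_all add: algebra_simps)
  then have "of_int (k - k') < (1::real)" "(- 1::real) < of_int (k - k')"
    using \<open>L > 0\<close> by (simp_all only: mult_less_cancel_left_pos)
  then show ?thesis by linarith
qed

definition trap_kernel :: "nat \<Rightarrow> complex \<Rightarrow> complex" where
  "trap_kernel N z = (exp (\<i> * of_nat N * z) + 1) / (2 * (exp (\<i> * of_nat N * z) - 1))"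

lemma exp_i_mult_eq_1D:
  assumes "N > 0" "exp (\<i> * of_nat N * z) = 1"
  shows "\<exists>m::int. z = of_real (2 * pi * of_int m / real N)"
proof -
  obtain m :: int where "Re (\<i> * of_nat N * z) = 0" "Im (\<i> * of_nat N * z) = of_int (2 * m) * pi"
    using assms(2) unfolding exp_eq_1 by blast
  then have "Im z = 0" "real N * Re z = 2 * of_int m * pi" using assms(1) by auto
  then have "z = of_real (2 * pi * of_int m / real N)" using assms(1) by (simp add: complex_eq_iff field_simps)
  then show ?thesis by blast
qed

lemma trap_kernel_periodic: "trap_kernel N (z + of_real (2 * pi)) = trap_kernel N z"
proof -
  have "\<i> * of_nat N * (z + of_real (2 * pi)) = \<i> * of_nat N * z + \<i> * (of_int (int N) * (of_real pi * 2))"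
    by (simp add: algebra_simps)
  then show ?thesis by (simp only: trap_kernel_def exp_plus_2pin)
qed

lemma exp_i_mult_neq_1_if_Im_nonzero:
  assumes "N > 0" "Im z \<noteq> 0"
  shows "exp (\<i> * of_nat N * z) \<noteq> 1"
proof
  assume "exp (\<i> * of_nat N * z) = 1"
  then have "norm (exp (\<i> * of_nat N * z)) = 1" by simp
  then show False using assms by simp
qed

lemma analytic_trap_kernel: "trap_kernel N analytic_on {z. exp (\<i> * of_nat N * z) \<noteq> 1}"
proof -
  have "open {z. exp (\<i> * of_nat N * z) \<noteq> 1}"
    by (intro open_Collect_neq continuous_intros)
  moreover have "trap_kernel N holomorphic_on {z. exp (\<i> * of_nat N * z) \<noteq> 1}"
    unfolding trap_kernel_def by (intro holomorphic_intros) auto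
  ultimately show ?thesis by (simp add: analytic_on_open)
qed

lemma trap_kernel_lower_bound:
  assumes "N > 0" "Im z < 0"
  shows "norm (trap_kernel N z - 1/2) \<le> 1 / (exp (\<bar>Im z\<bar> * real N) - 1)"
proof -
  let ?u = "exp (\<i> * of_nat N * z)"
  have norm_u: "norm ?u = exp (\<bar>Im z\<bar> * real N)" using assms(2) by simp
  have "\<bar>Im z\<bar> * real N > 0" using assms by (intro mult_pos_pos) auto
  then have gt1: "exp (\<bar>Im z\<bar> * real N) > 1" by simp
  then have "?u \<noteq> 1" using norm_u by (metis norm_one order_less_irrefl)
  then have "trap_kernel N z - 1/2 = 1 / (?u - 1)"
    by (simp add: trap_kernel_def field_simps)
  moreover have "norm ?u - 1 \<le> norm (?u - 1)" using norm_triangle_ineq2[of ?u 1] by simp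
  ultimately show ?thesis using norm_u gt1 by (simp add: norm_divide frac_le)
qed

lemma trap_kernel_upper_bound:
  assumes "N > 0" "Im z > 0"
  shows "norm (trap_kernel N z + 1/2) \<le> 1 / (exp (\<bar>Im z\<bar> * real N) - 1)"
proof -
  let ?u = "exp (\<i> * of_nat N * z)" and ?x = "\<bar>Im z\<bar> * real N"
  have norm_u: "norm ?u = exp (- ?x)" using assms(2) by simp
  have lt1: "exp (- ?x) < 1" using assms by simp
  then have "?u \<noteq> 1" using norm_u by (metis norm_one order_less_irrefl)
  then have "trap_kernel N z + 1/2 = ?u / (?u - 1)"
    by (simp add: trap_kernel_def field_simps)
  then have "norm (trap_kernel N z + 1/2) = exp (- ?x) / norm (?u - 1)"
    by (simp only: norm_divide norm_u)
  also have "\<dots> \<le> exp (- ?x) / (1 - exp (- ?x))"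
  proof (rule frac_le)
    show "1 - exp (- ?x) \<le> norm (?u - 1)"
      using norm_triangle_ineq2[of 1 ?u] by (simp only: norm_u norm_one norm_minus_commute)
  qed (use lt1 in auto)
  also have "\<dots> = 1 / (exp ?x - 1)"
    using lt1 by (simp add: exp_minus field_simps)
  finally show ?thesis .
qed

lemma trap_kernel_residue_node:
  assumes "N > 0" "open s" "z \<in> s" and g: "g holomorphic_on s" and node: "exp (\<i> * of_nat N * z) = 1"
  shows "residue (\<lambda>w. g w * trap_kernel N w) z = g z / (\<i> * of_nat N)"
proof -
  let ?u = "\<lambda>w. exp (\<i> * of_nat N * w)"
  define s' where "s' = s \<inter> ball z (2 * pi / N)"
  have isolated: "?u w \<noteq> 1" if "w \<in> s' - {z}" for w
  proof
    assume "?u w = 1"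
    obtain m m' :: int where m: "z = of_real (2 * pi * of_int m / N)" "w = of_real (2 * pi * of_int m' / N)"
      using exp_i_mult_eq_1D[OF assms(1) node] exp_i_mult_eq_1D[OF assms(1) \<open>?u w = 1\<close>] by blast
    have "m \<noteq> m'" using that m by auto
    then have "1 \<le> \<bar>of_int m' - of_int m :: real\<bar>" by linarith
    then have "2 * pi / N * 1 \<le> 2 * pi / N * \<bar>of_int m' - of_int m\<bar>"
      by (intro mult_left_mono) auto
    also have "\<dots> = \<bar>2 * pi * of_int m / N - 2 * pi * of_int m' / N\<bar>"
      using assms(1) by (simp add: abs_mult flip: diff_divide_distrib right_diff_distrib)
    also have "\<dots> = dist z w"
      by (simp only: m dist_norm of_real_diff[symmetric] norm_of_real)
    finally show False using that by (simp add: s'_def)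
  qed
  have "(\<lambda>w. g w * trap_kernel N w) = (\<lambda>w. (g w * (?u w + 1) / 2) / (?u w - 1))"
    by (simp add: trap_kernel_def fun_eq_iff)
  moreover have "residue (\<lambda>w. (g w * (?u w + 1) / 2) / (?u w - 1)) z
      = (g z * (?u z + 1) / 2) / (\<i> * of_nat N * ?u z)"
    using assms(1-3) node isolated
    by (intro residue_over_simple_zero[of s'] holomorphic_intros holomorphic_on_subset[OF g])
       (auto simp: s'_def intro!: derivative_eq_intros)
  ultimately show ?thesis using node by simp
qed

(* The window [c, c + 2\<pi>] contains the nodes 2\<pi>j/N, j < N, and no pole on its vertical sides. *)
locale trapezoid_window =
  fixes f :: "complex \<Rightarrow> complex" and \<alpha> F :: real and s0 :: complex and N :: nat and c :: real
  assumes alpha_pos: "\<alpha> > 0"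
    and periodic: "\<And>s. f (s + 2 * of_real pi) = f s"
    and analytic: "f analytic_on (strip \<alpha> - {s0 + of_real (2 * pi * of_int k) | k. True})"
    and poles: "{z \<in> strip \<alpha>. is_pole f z} = {s0 + of_real (2 * pi * of_int k) | k. True}"
    and Im_s0_nonzero: "Im s0 \<noteq> 0"
    and simple_pole: "zorder f s0 = -1"
    and boundary_bound: "\<And>s. \<bar>Im s\<bar> = \<alpha> \<Longrightarrow> norm (f s) \<le> F"
    and N_pos: "N > 0"
    and window: "- 2 * pi / N < c" "c < 0"
    and window_avoids_poles: "\<And>k::int. c \<noteq> Re s0 + 2 * pi * of_int k"
begin

abbreviation pole_lattice :: "complex set" where
  "pole_lattice \<equiv> {s0 + of_real (2 * pi * of_int k) | k. True}"

lemma periodic_int: "f (z + of_real (2 * pi * of_int k)) = f z"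
  using periodic_of_int_mult[of f "of_real (2 * pi)" z k] periodic by (simp add: mult_ac)

lemma s0_pole: "s0 \<in> strip \<alpha>" "is_pole f s0"
proof -
  have "s0 \<in> pole_lattice" by (intro CollectI exI[of _ 0]) simp
  then show "s0 \<in> strip \<alpha>" "is_pole f s0" using poles by blast+
qed

lemma Im_s0_less: "\<bar>Im s0\<bar> < \<alpha>"
proof -
  have "\<bar>Im s0\<bar> \<noteq> \<alpha>"
    using not_is_pole_if_bounded_on_horizontal[of s0 f F] s0_pole(2) boundary_bound by auto
  then show ?thesis using s0_pole(1) by (simp add: strip_def)
qed

definition window_pole :: complex where
  "window_pole = s0 + of_real (2 * pi * of_int \<lceil>(c - Re s0) / (2 * pi)\<rceil>)"

lemma window_pole: "window_pole \<in> pole_lattice" "Im window_pole = Im s0"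
    "c < Re window_pole" "Re window_pole < c + 2 * pi"
proof -
  let ?k = "\<lceil>(c - Re s0) / (2 * pi)\<rceil>"
  show "window_pole \<in> pole_lattice" unfolding window_pole_def by blast
  show "Im window_pole = Im s0" by (simp add: window_pole_def)
  have "Re window_pole = Re s0 + 2 * pi * of_int ?k" by (simp add: window_pole_def)
  then show "c < Re window_pole" "Re window_pole < c + 2 * pi"
    using lattice_point_in_period[of "2 * pi" c "Re s0", OF _ window_avoids_poles] by simp_all
qed

lemma window_pole_unique:
  assumes "z \<in> pole_lattice" "c \<le> Re z" "Re z \<le> c + 2 * pi"
  shows "z = window_pole"
proof -
  obtain k :: int where z: "z = s0 + of_real (2 * pi * of_int k)" using assms(1) by blast
  have "c \<noteq> Re s0 + 2 * pi * of_int k" "c \<noteq> Re s0 + 2 * pi * of_int (k - 1)"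
    using window_avoids_poles by blast+
  then have "c < Re s0 + 2 * pi * of_int k" "Re s0 + 2 * pi * of_int k < c + 2 * pi"
    using assms(2,3) z by (auto simp: algebra_simps)
  then have "k = \<lceil>(c - Re s0) / (2 * pi)\<rceil>"
    using window_pole(3,4) by (intro lattice_points_in_period_eq[of "2 * pi" c "Re s0"]) (auto simp: window_pole_def)
  then show ?thesis by (simp add: z window_pole_def)
qed

lemma window_pole_shift: "(\<lambda>w. f (window_pole + w)) = (\<lambda>w. f (s0 + w))"
proof
  fix w
  show "f (window_pole + w) = f (s0 + w)"
    using periodic_int[of "s0 + w"] by (simp add: window_pole_def add_ac)
qed

lemma window_pole_simple: "is_pole f window_pole" "zorder f window_pole = -1"
    "residue f window_pole = residue f s0"
  using window_pole_shift s0_pole(2) simple_pole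
  by (simp_all add: is_pole_shift_0[of f window_pole] is_pole_shift_0[of f s0]
      zorder_shift[of f window_pole] zorder_shift[of f s0]
      residue_shift_0[of f window_pole] residue_shift_0[of f s0] add.commute)

definition period_integral :: "real \<Rightarrow> (complex \<Rightarrow> complex) \<Rightarrow> complex" where
  "period_integral y g = contour_integral (linepath (Complex c y) (Complex (c + 2 * pi) y)) g"

lemma horizontal_segment:
  "closed_segment (Complex c y) (Complex (c + 2 * pi) y) = {z. Im z = y \<and> c \<le> Re z \<and> Re z \<le> c + 2 * pi}"
  by (auto simp: closed_segment_same_Im closed_segment_eq_real_ivl)

lemma period_integrable:
  assumes "continuous_on {z. Im z = y} g"
  shows "g contour_integrable_on linepath (Complex c y) (Complex (c + 2 * pi) y)"
proof (rule contour_integrable_continuous_linepath)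
  show "continuous_on (closed_segment (Complex c y) (Complex (c + 2 * pi) y)) g"
    using assms by (rule continuous_on_subset) (auto simp: horizontal_segment)
qed

lemma period_integral_add_lmul:
  assumes "continuous_on {z. Im z = y} g" "continuous_on {z. Im z = y} h"
  shows "period_integral y (\<lambda>z. g z + a * h z) = period_integral y g + a * period_integral y h"
  using period_integrable[OF assms(1)] period_integrable[OF assms(2)]
  by (simp add: period_integral_def contour_integral_add contour_integral_lmul contour_integrable_lmul)

lemma norm_period_integral_le:
  assumes "continuous_on {z. Im z = y} g" "\<And>z. Im z = y \<Longrightarrow> norm (g z) \<le> B"
  shows "norm (period_integral y g) \<le> 2 * pi * B"
proof -
  have "norm (g (Complex 0 y)) \<le> B" by (rule assms(2)) simp
  then have "0 \<le> B" using norm_ge_zero order_trans by blast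
  then have "norm (period_integral y g) \<le> B * norm (Complex (c + 2 * pi) y - Complex c y)"
    unfolding period_integral_def using period_integrable[OF assms(1)] assms(2)
    by (intro contour_integral_bound_linepath) (auto simp: horizontal_segment)
  also have "Complex (c + 2 * pi) y - Complex c y = of_real (2 * pi)" by (simp add: complex_eq_iff)
  finally show ?thesis by (simp add: mult.commute)
qed

lemma analytic_off_window_pole:
  assumes "- \<alpha> \<le> y1" "y2 \<le> \<alpha>"
  shows "f analytic_on cbox (Complex c y1) (Complex (c + 2 * pi) y2) - {window_pole}"
proof (rule analytic_on_subset[OF analytic], rule subsetI)
  fix z assume z: "z \<in> cbox (Complex c y1) (Complex (c + 2 * pi) y2) - {window_pole}"
  then have "c \<le> Re z" "Re z \<le> c + 2 * pi" "z \<noteq> window_pole"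
    by (auto simp: in_cbox_complex_iff)
  then have "z \<notin> pole_lattice" using window_pole_unique by blast
  moreover have "\<bar>Im z\<bar> \<le> \<alpha>" using z assms by (auto simp: in_cbox_complex_iff)
  ultimately show "z \<in> strip \<alpha> - pole_lattice" by (simp add: strip_def)
qed

lemma continuous_on_horizontal:
  assumes "\<bar>y\<bar> \<le> \<alpha>" "y \<noteq> Im s0"
  shows "continuous_on {z. Im z = y} f"
proof -
  have "{z. Im z = y} \<subseteq> strip \<alpha> - pole_lattice"
    using assms by (auto simp: strip_def)
  then show ?thesis
    by (intro holomorphic_on_imp_continuous_on analytic_imp_holomorphic analytic_on_subset[OF analytic])
qed

lemma period_integral_difference:
  assumes "- \<alpha> \<le> y1" "y1 < y2" "y2 \<le> \<alpha>" "y1 \<noteq> Im s0" "y2 \<noteq> Im s0"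
  shows "period_integral y1 f - period_integral y2 f
         = (if y1 < Im s0 \<and> Im s0 < y2 then 2 * pi * \<i> * residue f s0 else 0)"
proof -
  let ?box = "box (Complex c y1) (Complex (c + 2 * pi) y2)"
  let ?cbox = "cbox (Complex c y1) (Complex (c + 2 * pi) y2)"
  have in_box: "window_pole \<in> ?box \<longleftrightarrow> y1 < Im s0 \<and> Im s0 < y2"
    using window_pole by (auto simp: in_box_complex_iff)
  have "?cbox - ({window_pole} \<inter> ?box) \<subseteq> ?cbox - {window_pole}"
    using window_pole assms(4,5) by (auto simp: in_box_complex_iff in_cbox_complex_iff)
  then have "f analytic_on ?cbox - ({window_pole} \<inter> ?box)"
    using analytic_off_window_pole[OF assms(1,3)] analytic_on_subset by blast
  then have "period_integral y1 f - period_integral y2 f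
      = 2 * pi * \<i> * (\<Sum>p\<in>{window_pole} \<inter> ?box. residue f p)"
    unfolding period_integral_def using periodic assms(2)
    by (intro periodic_rectangle_residue) (auto simp: mult.commute)
  then show ?thesis using in_box window_pole_simple(3) by (auto split: if_splits)
qed

lemma period_integral_real: "period_integral 0 f = integral {0..2 * pi} (\<lambda>t. f (of_real t))"
proof -
  have "continuous_on \<real> f"
    using continuous_on_horizontal[of 0] Im_s0_nonzero alpha_pos
    by (auto elim: continuous_on_subset simp: complex_is_Real_iff)
  moreover have "2 * pi / N \<le> 2 * pi / 1"
    using N_pos by (intro frac_le) auto
  moreover have real_point: "Complex x 0 = of_real x" for x by (simp add: complex_eq_iff)
  ultimately show ?thesis
    unfolding period_integral_def real_point using window periodic
    by (intro contour_integral_real_period) (auto simp: mult.commute)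
qed

abbreviation node :: "nat \<Rightarrow> complex" where
  "node j \<equiv> complex_of_real (2 * pi * real j / real N)"

lemma node_in_box:
  assumes "j < N"
  shows "node j \<in> box (Complex c (- \<alpha>)) (Complex (c + 2 * pi) \<alpha>)"
proof -
  have "2 * pi * (real j + 1) \<le> 2 * pi * real N" using assms by (intro mult_left_mono) auto
  then have "2 * pi * real j / N < c + 2 * pi" using window(1) N_pos by (simp add: field_simps)
  moreover have "0 \<le> 2 * pi * real j / N" by simp
  then have "c < 2 * pi * real j / N" using window(2) by linarith
  ultimately show ?thesis using alpha_pos by (simp add: in_box_complex_iff)
qed

lemma exp_node: "exp (\<i> * of_nat N * node j) = 1"
proof -
  have "\<i> * of_nat N * node j = \<i> * (of_int (int j) * (of_real pi * 2))"
    using N_pos by (simp add: field_simps)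
  then show ?thesis by simp
qed

lemma kernel_poles_in_window:
  assumes "z \<in> cbox (Complex c (- \<alpha>)) (Complex (c + 2 * pi) \<alpha>)" "exp (\<i> * of_nat N * z) = 1"
  shows "z \<in> node ` {..<N}"
proof -
  obtain m :: int where m: "z = of_real (2 * pi * of_int m / N)"
    using exp_i_mult_eq_1D[OF N_pos assms(2)] by blast
  then have "- 2 * pi / N < 2 * pi * of_int m / N" "2 * pi * of_int m / N < 2 * pi"
    using assms(1) window by (auto simp: in_cbox_complex_iff)
  then have "2 * pi * (- 1) < 2 * pi * of_int m" "2 * pi * of_int m < 2 * pi * real N"
    using N_pos by (simp_all add: divide_less_eq less_divide_eq)
  moreover have "0 < 2 * pi" by simp
  ultimately have "(- 1::real) < of_int m" "of_int m < real N"
    by (simp_all only: mult_less_cancel_left_pos)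
  then have "z = node (nat m)" "nat m < N" by (auto simp: m)
  then show ?thesis by blast
qed

lemma residue_kernel_at_window_pole:
  "residue (\<lambda>z. f z * trap_kernel N z) window_pole = residue f s0 * trap_kernel N window_pole"
proof -
  let ?s = "box (Complex c (- \<alpha>)) (Complex (c + 2 * pi) \<alpha>) \<inter> {z. Im z \<noteq> 0}"
  have "open ?s" by (intro open_Int open_box open_Collect_neq continuous_intros)
  moreover have "window_pole \<in> ?s"
    using window_pole Im_s0_less Im_s0_nonzero by (auto simp: in_box_complex_iff)
  moreover have "f holomorphic_on ?s - {window_pole}"
    using analytic_off_window_pole[of "- \<alpha>" \<alpha>] box_subset_cbox
    by (intro analytic_imp_holomorphic) (auto elim!: analytic_on_subset)
  moreover have "trap_kernel N holomorphic_on ?s"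
    using exp_i_mult_neq_1_if_Im_nonzero[OF N_pos]
    by (intro analytic_imp_holomorphic) (auto intro: analytic_on_subset[OF analytic_trap_kernel])
  ultimately show ?thesis
    using residue_mult_simple_pole window_pole_simple by metis
qed

lemma residue_kernel_at_node:
  assumes "j < N"
  shows "residue (\<lambda>z. f z * trap_kernel N z) (node j) = f (node j) / (\<i> * of_nat N)"
proof (rule trap_kernel_residue_node[OF N_pos _ _ _ exp_node])
  let ?s = "box (Complex c (- \<alpha>)) (Complex (c + 2 * pi) \<alpha>) - {window_pole}"
  show "open ?s" by auto
  have "Im (node j) \<noteq> Im window_pole"
    using window_pole(2) Im_s0_nonzero by (simp only: Im_complex_of_real)
  then have "node j \<noteq> window_pole" by metis
  then show "node j \<in> ?s" using node_in_box[OF assms] by blast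
  show "f holomorphic_on ?s"
    using analytic_off_window_pole[of "- \<alpha>" \<alpha>] box_subset_cbox
    by (intro analytic_imp_holomorphic) (auto elim!: analytic_on_subset)
qed

lemma kernel_period_integral_difference:
  "period_integral (- \<alpha>) (\<lambda>z. f z * trap_kernel N z)
     - period_integral \<alpha> (\<lambda>z. f z * trap_kernel N z)
   = 2 * pi * \<i> * (residue f s0 * trap_kernel N window_pole + (\<Sum>j<N. f (node j)) / (\<i> * of_nat N))"
proof -
  let ?h = "\<lambda>z. f z * trap_kernel N z"
  let ?cbox = "cbox (Complex c (- \<alpha>)) (Complex (c + 2 * pi) \<alpha>)"
  define pts where "pts = insert window_pole (node ` {..<N})"
  have pole_not_node: "window_pole \<notin> node ` {..<N}"
    using window_pole(2) Im_s0_nonzero by (auto simp only: Im_complex_of_real)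
  have "pts \<subseteq> box (Complex c (- \<alpha>)) (Complex (c + 2 * pi) \<alpha>)"
    using window_pole Im_s0_less node_in_box by (auto simp: pts_def in_box_complex_iff)
  moreover have "?h analytic_on ?cbox - pts"
  proof (rule analytic_on_mult)
    show "f analytic_on ?cbox - pts"
      using analytic_off_window_pole[of "- \<alpha>" \<alpha>] by (rule analytic_on_subset) (auto simp: pts_def)
    show "trap_kernel N analytic_on ?cbox - pts"
      using kernel_poles_in_window by (intro analytic_on_subset[OF analytic_trap_kernel]) (auto simp: pts_def)
  qed
  moreover have "?h (z + of_real (2 * pi)) = ?h z" for z
    using periodic[of z] trap_kernel_periodic[of N z] by (simp add: mult.commute)
  ultimately have "period_integral (- \<alpha>) ?h - period_integral \<alpha> ?h
      = 2 * pi * \<i> * (\<Sum>p\<in>pts. residue ?h p)"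
    unfolding period_integral_def using alpha_pos
    by (intro periodic_rectangle_residue) (auto simp: pts_def)
  also have "(\<Sum>p\<in>pts. residue ?h p) = residue ?h window_pole + (\<Sum>j<N. residue ?h (node j))"
    using pole_not_node N_pos by (simp add: pts_def sum.reindex inj_on_def)
  also have "(\<Sum>j<N. residue ?h (node j)) = (\<Sum>j<N. f (node j)) / (\<i> * of_nat N)"
    unfolding sum_divide_distrib by (intro sum.cong refl residue_kernel_at_node) simp
  also note residue_kernel_at_window_pole
  finally show ?thesis .
qed

lemma trapezoid_sum:
  "complex_of_real (2 * pi / real N) * (\<Sum>j=1..N. f (node j))
   = 2 * pi * \<i> * ((\<Sum>j<N. f (node j)) / (\<i> * of_nat N))"
proof -
  have "f (node N) = f (node 0)" using periodic[of 0] N_pos by simp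
  moreover have "(\<Sum>j=0..N. f (node j)) = f (node 0) + (\<Sum>j=1..N. f (node j))"
    by (simp add: sum.atLeast_Suc_atMost)
  moreover have "(\<Sum>j=0..N. f (node j)) = (\<Sum>j<N. f (node j)) + f (node N)"
    by (simp add: atLeast0AtMost lessThan_Suc_atMost[symmetric])
  ultimately have "(\<Sum>j=1..N. f (node j)) = (\<Sum>j<N. f (node j))" by simp
  then show ?thesis using N_pos by (simp add: field_simps)
qed

lemma continuous_on_boundary_lines:
  assumes "y = \<alpha> \<or> y = - \<alpha>"
  shows "continuous_on {z. Im z = y} f" "continuous_on {z. Im z = y} (trap_kernel N)"
proof -
  show "continuous_on {z. Im z = y} f"
    using assms alpha_pos Im_s0_less by (intro continuous_on_horizontal) auto
  have "{z. Im z = y} \<subseteq> {z. exp (\<i> * of_nat N * z) \<noteq> 1}"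
    using assms alpha_pos exp_i_mult_neq_1_if_Im_nonzero[OF N_pos] by auto
  then show "continuous_on {z. Im z = y} (trap_kernel N)"
    by (intro holomorphic_on_imp_continuous_on analytic_imp_holomorphic analytic_on_subset[OF analytic_trap_kernel])
qed

lemma trap_err_eq:
  "trap_err f N = period_integral (- \<alpha>) (\<lambda>z. f z * (trap_kernel N z - 1/2))
     - period_integral \<alpha> (\<lambda>z. f z * (trap_kernel N z + 1/2))
     + 2 * pi * \<i> * residue f s0 * ((if Im s0 < 0 then 1/2 else - 1/2) - trap_kernel N window_pole)"
proof -
  let ?I = period_integral
  have split: "?I y (\<lambda>z. f z * trap_kernel N z) = ?I y (\<lambda>z. f z * (trap_kernel N z + a)) + (- a) * ?I y f"
    if "y = \<alpha> \<or> y = - \<alpha>" for y a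
  proof -
    have "?I y (\<lambda>z. f z * trap_kernel N z) = ?I y (\<lambda>z. f z * (trap_kernel N z + a) + (- a) * f z)"
      by (simp add: algebra_simps)
    also have "\<dots> = ?I y (\<lambda>z. f z * (trap_kernel N z + a)) + (- a) * ?I y f"
      using continuous_on_boundary_lines[OF that]
      by (intro period_integral_add_lmul continuous_intros) auto
    finally show ?thesis .
  qed
  have lower: "?I (- \<alpha>) f - ?I 0 f = (if Im s0 < 0 then 2 * pi * \<i> * residue f s0 else 0)"
    using period_integral_difference[of "- \<alpha>" 0] alpha_pos Im_s0_less Im_s0_nonzero by auto
  have upper: "?I 0 f - ?I \<alpha> f = (if 0 < Im s0 then 2 * pi * \<i> * residue f s0 else 0)"
    using period_integral_difference[of 0 \<alpha>] alpha_pos Im_s0_less Im_s0_nonzero by auto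
  have jumps: "(?I (- \<alpha>) f - ?I 0 f) - (?I 0 f - ?I \<alpha> f)
      = 2 * pi * \<i> * residue f s0 * (2 * (if Im s0 < 0 then 1/2 else - 1/2))"
    unfolding lower upper using Im_s0_nonzero by auto
  have "trap_err f N = 2 * pi * \<i> * ((\<Sum>j<N. f (node j)) / (\<i> * of_nat N)) - ?I 0 f"
    unfolding trap_err_def trapezoid_sum period_integral_real ..
  moreover have "?I (- \<alpha>) (\<lambda>z. f z * trap_kernel N z)
      = ?I (- \<alpha>) (\<lambda>z. f z * (trap_kernel N z - 1/2)) + 1/2 * ?I (- \<alpha>) f"
    using split[of "- \<alpha>" "- 1/2"] by simp
  moreover have "?I \<alpha> (\<lambda>z. f z * trap_kernel N z)
      = ?I \<alpha> (\<lambda>z. f z * (trap_kernel N z + 1/2)) - 1/2 * ?I \<alpha> f"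
    using split[of \<alpha> "1/2"] by simp
  ultimately show ?thesis using kernel_period_integral_difference jumps by algebra
qed

lemma norm_boundary_integral_le:
  assumes "y = \<alpha> \<or> y = - \<alpha>"
    and kernel_bound: "\<And>z. Im z = y \<Longrightarrow> norm (k z) \<le> 1 / (exp (\<alpha> * real N) - 1)"
    and "continuous_on {z. Im z = y} k"
  shows "norm (period_integral y (\<lambda>z. f z * k z)) \<le> 2 * pi * (F / (exp (\<alpha> * real N) - 1))"
proof (rule norm_period_integral_le)
  show "continuous_on {z. Im z = y} (\<lambda>z. f z * k z)"
    using continuous_on_boundary_lines(1)[OF assms(1)] assms(3) by (rule continuous_on_mult)
  fix z assume z: "Im z = y"
  have "norm (f z) \<le> F" using z assms(1) alpha_pos by (intro boundary_bound) auto
  moreover have "norm (k z) \<le> 1 / (exp (\<alpha> * real N) - 1)" using z by (rule kernel_bound)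
  ultimately have "norm (f z) * norm (k z) \<le> F * (1 / (exp (\<alpha> * real N) - 1))"
    by (intro mult_mono) (auto intro: order_trans[OF norm_ge_zero])
  then show "norm (f z * k z) \<le> F / (exp (\<alpha> * real N) - 1)" by (simp add: norm_mult)
qed

lemma trap_err_bound:
  "norm (trap_err f N) \<le> 2 * pi * norm (residue f s0) / (exp (\<bar>Im s0\<bar> * real N) - 1)
                          + 4 * pi * F / (exp (\<alpha> * real N) - 1)"
proof -
  define K where "K = (if Im s0 < 0 then 1/2 else - 1/2) - trap_kernel N window_pole"
  have lower: "norm (period_integral (- \<alpha>) (\<lambda>z. f z * (trap_kernel N z - 1/2)))
      \<le> 2 * pi * (F / (exp (\<alpha> * real N) - 1))"
  proof (rule norm_boundary_integral_le)
    fix z assume "Im z = - \<alpha>"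
    then show "norm (trap_kernel N z - 1/2) \<le> 1 / (exp (\<alpha> * real N) - 1)"
      using trap_kernel_lower_bound[OF N_pos, of z] alpha_pos by simp
  qed (use continuous_on_boundary_lines(2)[of "- \<alpha>"] in \<open>auto intro: continuous_intros\<close>)
  have upper: "norm (period_integral \<alpha> (\<lambda>z. f z * (trap_kernel N z + 1/2)))
      \<le> 2 * pi * (F / (exp (\<alpha> * real N) - 1))"
  proof (rule norm_boundary_integral_le)
    fix z assume "Im z = \<alpha>"
    then show "norm (trap_kernel N z + 1/2) \<le> 1 / (exp (\<alpha> * real N) - 1)"
      using trap_kernel_upper_bound[OF N_pos, of z] alpha_pos by simp
  qed (use continuous_on_boundary_lines(2)[of \<alpha>] in \<open>auto intro: continuous_intros\<close>)
  have "norm K \<le> 1 / (exp (\<bar>Im s0\<bar> * real N) - 1)"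
    using trap_kernel_lower_bound[OF N_pos, of window_pole] trap_kernel_upper_bound[OF N_pos, of window_pole]
      window_pole(2) Im_s0_nonzero
    by (auto simp: K_def norm_minus_commute)
  then have pole: "norm (2 * pi * \<i> * residue f s0 * K)
      \<le> 2 * pi * norm (residue f s0) * (1 / (exp (\<bar>Im s0\<bar> * real N) - 1))"
    by (simp add: norm_mult mult_left_mono del: times_divide_eq_right)
  have "norm (trap_err f N) \<le> 2 * pi * (F / (exp (\<alpha> * real N) - 1)) + 2 * pi * (F / (exp (\<alpha> * real N) - 1))
      + 2 * pi * norm (residue f s0) * (1 / (exp (\<bar>Im s0\<bar> * real N) - 1))"
    unfolding trap_err_eq K_def[symmetric]
    using lower upper pole by (smt (verit) norm_triangle_ineq norm_triangle_ineq4)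
  then show ?thesis by (simp add: field_simps)
qed

end

theorem lemma2p2:
  fixes f :: "complex \<Rightarrow> complex" and \<alpha> F :: real and s0 :: complex and N :: nat
  assumes "\<alpha> > 0"
    and "\<And>s::complex. f (s + 2 * of_real pi) = f s"
    and "f meromorphic_on strip \<alpha>"
    and "f analytic_on (strip \<alpha> - {s0 + of_real (2 * pi * of_int k) | k. True})"
    and "{z \<in> strip \<alpha>. is_pole f z} = {s0 + of_real (2 * pi * of_int k) | k. True}"
    and "\<bar>Im s0\<bar> \<le> \<alpha>" and "Im s0 \<noteq> 0"
    and "zorder f s0 = -1"
    and "\<And>s. \<bar>Im s\<bar> = \<alpha> \<Longrightarrow> norm (f s) \<le> F"
    and "N > 0"
  shows "norm (trap_err f N)
         \<le> 2 * pi * norm (residue f s0) / (exp (\<bar>Im s0\<bar> * real N) - 1)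
           + 4 * pi * F / (exp (\<alpha> * real N) - 1)"
proof -
  obtain c where "c \<in> {- 2 * pi / N <..< 0}" "c \<notin> range (\<lambda>k::int. Re s0 + 2 * pi * of_int k)"
    using real_interval_avoid_countable_set[of "- 2 * pi / N" 0 "range (\<lambda>k::int. Re s0 + 2 * pi * of_int k)"]
      \<open>N > 0\<close> by auto
  then interpret trapezoid_window f \<alpha> F s0 N c
    using assms by unfold_locales auto
  show ?thesis by (rule trap_err_bound)
qed

end
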